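(* Let $1<q<p<\infty$. Let $M\in\mathcal C^3$ be a normalized Orlicz function with $M'(0)=0$ that is linear on $[M^{-1}(1),\infty)$, such that $\lim_{t\to0^+}M''(t)/t^{q-2}$ exists in $\overline{\mathbb R}$, such that for some constant $C>0$ \[ \int_0^s\frac{M(t)}{t^q}\,\frac{dt}{t}\le C\frac{M(s)}{s^q}\qquad\text{for all }0<s\le M^{-1}(1), \] and such that $f(x)=\big(1-\frac2p\big)x^{-3}M''(x^{-1})-\frac1px^{-4}M'''(x^{-1})$ is non-negative for all $x>0$. Let $X$ be a positive random variable with density $f$. Then $X^q$ is integrable.
   Context: An Orlicz function is a convex $M:[0,\infty)\to[0,\infty)$ with $M(0)=0$, $M(t)>0$ for $t>0$; it is normalized if $\int_0^\infty x\,\mathrm dM'(x)=1$, $M'$ denoting the right derivative. *)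

theory Defs
  imports "HOL-Analysis.Analysis" "HOL-Probability.Probability"
begin

text \<open>Orlicz functions are modelled as real functions; only their values on [0,inf) matter.\<close>

definition orlicz_function :: "(real \<Rightarrow> real) \<Rightarrow> bool" where
  "orlicz_function M \<longleftrightarrow> convex_on {0..} M \<and> M 0 = 0 \<and> (\<forall>t>0. M t > 0)"

definition right_deriv :: "(real \<Rightarrow> real) \<Rightarrow> real \<Rightarrow> real" where
  "right_deriv M x = Lim (at_right 0) (\<lambda>h. (M (x + h) - M x) / h)"

text \<open>Normalization: the Lebesgue-Stieltjes integral of x with respect to dM' over [0,inf) is 1.
  M' is extended to the whole line as a constant on (-inf,0], so the Stieltjes measure
  puts no mass on (-inf,0).\<close>
definition normalized_orlicz :: "(real \<Rightarrow> real) \<Rightarrow> bool" where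
  "normalized_orlicz M \<longleftrightarrow>
     (\<integral>\<^sup>+ x \<in> {0..}. ennreal x \<partial>(interval_measure (\<lambda>t. right_deriv M (max t 0)))) = 1"

definition orlicz_inv :: "(real \<Rightarrow> real) \<Rightarrow> real \<Rightarrow> real" where
  "orlicz_inv M y = (THE s. 0 \<le> s \<and> M s = y)"

end

theory Submission
  imports Defs
begin

(* Let a = M\<^sup>-\<^sup>1(1). Since M'' and M''' vanish beyond a, the density f is supported on
   [1/a, \<infinity>), so E X\<^sup>q is the integral of x\<^sup>q f(x) over [1/a, \<infinity>). With H x = x\<^sup>q\<^sup>-\<^sup>2 M''(1/x) and
   h x = H x / x one has x\<^sup>q f(x) = (1 - q/p) h x + H'(x) / p. Two integrations by parts turn the
   integral of h over [1/a, T] into G T - G (1/a) + q (q - 1) times the integral of M(t) / t\<^sup>q\<^sup>+\<^sup>1 over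
   [1/T, a], where G \<le> 0; the integral condition on M bounds this uniformly in T. The limit of H
   at infinity exists by assumption and cannot be +\<infinity>: otherwise h \<ge> 1/x eventually and the
   integral of h would grow like ln T. So H is bounded above too, and the truncated moments are
   uniformly bounded. *)

lemma powr_diff_numeral:
  fixes x q :: real
  assumes "0 < x"
  shows "x powr (q - 1) = x powr q / x" "x powr (q - numeral n) = x powr q / x ^ numeral n"
    "x powr (- numeral n) = 1 / x ^ numeral n"
  using assms by (simp_all add: powr_diff powr_minus_divide)

lemma has_real_derivative_at_nonneg_within:
  assumes "(f has_real_derivative D) (at x within {0..})" "0 < x"
  shows "(f has_real_derivative D) (at x)"
  using assms at_within_interior[of x "{0..}"] by simp

lemma DERIV_eq_on_open:
  fixes f g :: "real \<Rightarrow> real"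
  assumes "(f has_real_derivative D) (at x)" "(g has_real_derivative E) (at x)"
    "open S" "x \<in> S" "\<And>y. y \<in> S \<Longrightarrow> f y = g y"
  shows "D = E"
  using has_field_derivative_transform_within_open[OF assms(1,3,4,5)] assms(2) DERIV_unique by blast

lemma has_real_derivative_inverse_comp:
  assumes "0 < x" "\<And>u. 0 < u \<Longrightarrow> (f has_real_derivative f' u) (at u)"
  shows "((\<lambda>x. f (1 / x)) has_real_derivative - f' (1 / x) / x\<^sup>2) (at x)"
proof -
  have "((\<lambda>x. 1 / x) has_real_derivative - 1 / x\<^sup>2) (at x)"
    using assms by (auto intro!: derivative_eq_intros simp: power2_eq_square)
  from DERIV_chain2[OF assms(2) this] show ?thesis using assms(1) by simp
qed

lemma continuous_on_compose_divide:
  fixes g :: "real \<Rightarrow> real"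
  assumes "continuous_on {0..} g" "S \<subseteq> {0<..}"
  shows "continuous_on S (\<lambda>x. g (1 / x))"
proof (rule continuous_on_compose2[OF assms(1)])
  show "continuous_on S (\<lambda>x. 1 / x)"
    using assms(2) by (intro continuous_intros) auto
  show "(\<lambda>x. 1 / x) ` S \<subseteq> {0..}"
    using assms(2) by auto
qed

lemma continuous_bounded_above_if_eventually:
  fixes h :: "real \<Rightarrow> real"
  assumes "continuous_on {c..} h" "eventually (\<lambda>x. h x \<le> B) at_top"
  obtains B' where "\<And>x. c \<le> x \<Longrightarrow> h x \<le> B'"
proof -
  obtain T where T: "c \<le> T" "\<And>x. T \<le> x \<Longrightarrow> h x \<le> B"
  proof -
    obtain T0 where "\<And>x. T0 \<le> x \<Longrightarrow> h x \<le> B"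
      using assms(2) unfolding eventually_at_top_linorder by blast
    then show ?thesis using that[of "max c T0"] by simp
  qed
  obtain y where y: "\<And>x. x \<in> {c..T} \<Longrightarrow> h x \<le> h y"
    using continuous_attains_sup[OF compact_Icc _ continuous_on_subset[OF assms(1)], of c T] T(1)
    by (auto simp: Ball_def)
  have "h x \<le> max B (h y)" if "c \<le> x" for x
    using that T(2)[of x] y[of x] by (cases "x \<le> T") auto
  then show ?thesis using that by blast
qed

lemma has_integral_of_deriv_on_pos:
  fixes F f :: "real \<Rightarrow> real"
  assumes "0 < a" "a \<le> b" "\<And>x. 0 < x \<Longrightarrow> (F has_real_derivative f x) (at x)"
  shows "(f has_integral F b - F a) {a..b}"
proof (rule fundamental_theorem_of_calculus[OF assms(2)])
  fix x assume "x \<in> {a..b}"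
  with assms show "(F has_vector_derivative f x) (at x within {a..b})"
    by (auto simp flip: has_real_derivative_iff_has_vector_derivative intro: has_field_derivative_at_within)
qed

lemma has_integral_inverse:
  fixes a b :: real
  assumes "0 < a" "a \<le> b"
  shows "((\<lambda>x. 1 / x) has_integral ln b - ln a) {a..b}"
  using assms by (intro has_integral_of_deriv_on_pos) (auto intro!: derivative_eq_intros)

lemma has_integral_inverse_substitution:
  fixes f :: "real \<Rightarrow> real"
  assumes "0 < c" "c \<le> T" "continuous_on {1/T..1/c} f"
  shows "((\<lambda>x. f (1 / x) / x\<^sup>2) has_integral integral {1/T..1/c} f) {c..T}"
proof -
  have "(\<lambda>x. 1 / x) ` {c..T} \<subseteq> {1/T..1/c}"
    using assms(1) by (auto simp: frac_le)
  moreover have "continuous_on {c..T} (\<lambda>x. 1 / x)"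
    using assms(1) by (intro continuous_intros) auto
  moreover have "((\<lambda>x. 1 / x) has_real_derivative - 1 / x\<^sup>2) (at x within {c..T})"
    if "x \<in> {c..T} - {}" for x
    using that assms(1) by (auto intro!: derivative_eq_intros simp: power2_eq_square)
  ultimately have "((\<lambda>x. (- 1 / x\<^sup>2) *\<^sub>R f (1 / x)) has_integral
      integral {1/c..1/T} f - integral {1/T..1/c} f) {c..T}"
    by (rule has_integral_substitution_general[OF finite.emptyI assms(2) _ assms(3)])
  then have "((\<lambda>x. - ((- 1 / x\<^sup>2) *\<^sub>R f (1 / x))) has_integral
      - (integral {1/c..1/T} f - integral {1/T..1/c} f)) {c..T}"
    by (rule has_integral_neg)
  moreover have "integral {1/c..1/T} f = 0"
    using assms(1,2) by (cases "c = T") (auto simp: frac_less2)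
  ultimately show ?thesis by simp
qed

lemma nn_integral_le_if_truncations_le:
  fixes f :: "real \<Rightarrow> ennreal"
  assumes "f \<in> borel_measurable borel" "\<And>T. c \<le> T \<Longrightarrow> (\<integral>\<^sup>+x. f x * indicator {..T} x \<partial>lborel) \<le> B"
  shows "(\<integral>\<^sup>+x. f x \<partial>lborel) \<le> B"
proof -
  define g where "g n x = f x * indicator {..c + real n} x" for n x
  have "incseq g"
    unfolding incseq_def le_fun_def g_def by (auto split: split_indicator)
  moreover have "(SUP n. g n x) = f x" for x
  proof -
    obtain n where "x - c \<le> real n" using real_arch_simple by blast
    then have "g n x = f x" unfolding g_def by (simp split: split_indicator)
    moreover have "g m x \<le> f x" for m unfolding g_def by (simp split: split_indicator)
    ultimately show ?thesis by (metis SUP_upper UNIV_I SUP_least antisym)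
  qed
  ultimately have "(\<integral>\<^sup>+x. f x \<partial>lborel) = (SUP n. \<integral>\<^sup>+x. g n x \<partial>lborel)"
    using nn_integral_monotone_convergence_SUP[of g] assms(1) unfolding g_def by simp
  also have "\<dots> \<le> B"
    using assms(2) unfolding g_def by (intro SUP_least) simp
  finally show ?thesis .
qed

locale smooth_orlicz =
  fixes M M1 M2 M3 :: "real \<Rightarrow> real"
  assumes orlicz: "orlicz_function M"
    and M_deriv_nonneg: "\<And>x. x \<ge> 0 \<Longrightarrow> (M has_real_derivative M1 x) (at x within {0..})"
    and M1_deriv_nonneg: "\<And>x. x \<ge> 0 \<Longrightarrow> (M1 has_real_derivative M2 x) (at x within {0..})"
    and M2_deriv_nonneg: "\<And>x. x \<ge> 0 \<Longrightarrow> (M2 has_real_derivative M3 x) (at x within {0..})"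
    and continuous_M3: "continuous_on {0..} M3"
    and linear_tail: "\<exists>\<alpha> \<beta>. \<forall>t \<ge> orlicz_inv M 1. M t = \<alpha> * t + \<beta>"
begin

lemma M_deriv: "0 < x \<Longrightarrow> (M has_real_derivative M1 x) (at x)"
  and M1_deriv: "0 < x \<Longrightarrow> (M1 has_real_derivative M2 x) (at x)"
  and M2_deriv: "0 < x \<Longrightarrow> (M2 has_real_derivative M3 x) (at x)"
  using M_deriv_nonneg M1_deriv_nonneg M2_deriv_nonneg
  by (auto intro: has_real_derivative_at_nonneg_within)

lemma continuous_M: "continuous_on {0..} M"
  and continuous_M2: "continuous_on {0..} M2"
  using M_deriv_nonneg M2_deriv_nonneg by (auto intro!: DERIV_continuous_on)

lemma M_0: "M 0 = 0" and M_pos: "0 < t \<Longrightarrow> 0 < M t"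
  using orlicz by (auto simp: orlicz_function_def)

lemma M_le_scaled:
  assumes "0 \<le> s" "s \<le> t" "0 < t"
  shows "M s \<le> s / t * M t"
proof -
  have "M ((1 - s/t) *\<^sub>R 0 + (s/t) *\<^sub>R t) \<le> (1 - s/t) * M 0 + (s/t) * M t"
    using orlicz assms unfolding orlicz_function_def by (intro convex_onD) auto
  then show ?thesis using assms M_0 by simp
qed

lemma M_strict_mono: "0 \<le> s \<Longrightarrow> s < t \<Longrightarrow> M s < M t"
  using M_le_scaled[of s t] M_pos[of t] by (smt (verit) divide_less_eq_1_pos mult_less_cancel_right2)

lemma orlicz_inv:
  assumes "0 < y"
  shows "0 < orlicz_inv M y" "M (orlicz_inv M y) = y"
proof -
  define T where "T = max 1 (y / M 1)"
  have "T * M 1 \<le> M T"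
    using M_le_scaled[of 1 T] by (simp add: T_def field_simps)
  moreover have "y \<le> T * M 1"
    using M_pos[of 1] mult_right_mono[of "y / M 1" T "M 1"] by (simp add: T_def)
  ultimately obtain s where s: "0 \<le> s" "M s = y"
    using IVT'[of M 0 y T] continuous_on_subset[OF continuous_M] assms M_0
    by (fastforce simp: T_def)
  have "\<exists>!s. 0 \<le> s \<and> M s = y"
    using s M_strict_mono by (metis linorder_neqE_linordered_idom order_less_irrefl)
  then have "orlicz_inv M y = s"
    unfolding orlicz_inv_def using s by (intro the1_equality) auto
  then show "0 < orlicz_inv M y" "M (orlicz_inv M y) = y"
    using s assms M_0 by (auto simp: order.order_iff_strict)
qed

abbreviation M_inv_1 :: real where "M_inv_1 \<equiv> orlicz_inv M 1"

lemma M_inv_1_pos: "0 < M_inv_1"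
  using orlicz_inv[of 1] by simp

lemma pos_if_ge_inverse: "1 / M_inv_1 \<le> x \<Longrightarrow> 0 < x"
  using M_inv_1_pos by (auto intro: less_le_trans[of 0 "1 / M_inv_1"])

lemma M1_nonneg:
  assumes "0 < x"
  shows "0 \<le> M1 x"
proof (rule ccontr)
  assume "\<not> 0 \<le> M1 x"
  then obtain d where d: "0 < d" "\<And>e. 0 < e \<Longrightarrow> e < d \<Longrightarrow> M (x + e) < M x"
    using DERIV_neg_dec_right[OF M_deriv[OF assms]] by (auto simp: not_le)
  then have "M (x + d / 2) < M x" by simp
  then show False using M_strict_mono[of x "x + d / 2"] assms d(1) by simp
qed

lemma M2_tail: "M_inv_1 < x \<Longrightarrow> M2 x = 0"
  and M3_tail: "M_inv_1 < x \<Longrightarrow> M3 x = 0"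
proof -
  obtain \<alpha> \<beta> where lin: "\<And>t. M_inv_1 \<le> t \<Longrightarrow> M t = \<alpha> * t + \<beta>"
    using linear_tail by blast
  let ?S = "{M_inv_1<..}"
  have pos: "y \<in> ?S \<Longrightarrow> 0 < y" for y using M_inv_1_pos by simp
  have M1_eq: "M1 y = \<alpha>" if "y \<in> ?S" for y
    by (rule DERIV_eq_on_open[OF M_deriv[OF pos[OF that]], of "\<lambda>t. \<alpha> * t + \<beta>" _ ?S])
      (use that lin in \<open>auto intro!: derivative_eq_intros\<close>)
  have M2_eq: "M2 y = 0" if "y \<in> ?S" for y
    by (rule DERIV_eq_on_open[OF M1_deriv[OF pos[OF that]], of "\<lambda>t. \<alpha>" _ ?S])
      (use that M1_eq in \<open>auto intro!: derivative_eq_intros\<close>)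
  show "M2 x = 0" if "M_inv_1 < x"
    using M2_eq that by simp
  show "M3 x = 0" if "M_inv_1 < x"
    by (rule DERIV_eq_on_open[OF M2_deriv[OF pos[of x]], of "\<lambda>t. 0" _ ?S])
      (use that M2_eq in \<open>auto intro!: derivative_eq_intros\<close>)
qed

definition dens :: "real \<Rightarrow> real \<Rightarrow> real" where
  "dens p x = (1 - 2 / p) * x powr (-3) * M2 (1 / x) - (1 / p) * x powr (-4) * M3 (1 / x)"

lemma dens_eq_0: "0 < x \<Longrightarrow> x < 1 / M_inv_1 \<Longrightarrow> dens p x = 0"
  unfolding dens_def using M2_tail M3_tail M_inv_1_pos by (simp add: less_divide_eq mult.commute)

lemma continuous_on_dens: "S \<subseteq> {0<..} \<Longrightarrow> continuous_on S (dens p)"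
  unfolding dens_def
  by (intro continuous_intros continuous_on_compose_divide[OF continuous_M2]
      continuous_on_compose_divide[OF continuous_M3]) auto

end

locale orlicz_power = smooth_orlicz +
  fixes q :: real
  assumes q_gt_1: "1 < q"
begin

definition H :: "real \<Rightarrow> real" where "H x = x powr (q - 2) * M2 (1 / x)"
definition h :: "real \<Rightarrow> real" where "h x = x powr (q - 3) * M2 (1 / x)"
definition G :: "real \<Rightarrow> real" where
  "G x = - (q - 1) * x powr q * M (1 / x) - x powr (q - 1) * M1 (1 / x)"
definition phi :: "real \<Rightarrow> real" where "phi t = M t / t powr q / t"

lemma H_eq_ratio: "0 < x \<Longrightarrow> H x = M2 (1 / x) / (1 / x) powr (q - 2)"
  unfolding H_def by (simp add: powr_divide)

lemma h_eq: "0 < x \<Longrightarrow> h x = H x / x"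
  unfolding H_def h_def by (simp add: powr_diff_numeral eval_nat_numeral)

lemma continuous_on_H: "continuous_on S H"
  and continuous_on_h: "continuous_on S h" if "S \<subseteq> {0<..}"
proof -
  have "continuous_on S (\<lambda>x. M2 (1 / x))"
    by (rule continuous_on_compose_divide[OF continuous_M2 that])
  moreover have "continuous_on S (\<lambda>x. x powr r)" for r
    using that by (intro continuous_on_powr' continuous_intros) auto
  ultimately show "continuous_on S H" "continuous_on S h"
    unfolding H_def h_def by (auto intro: continuous_on_mult)
qed

lemma H_deriv:
  assumes "0 < x"
  shows "(H has_real_derivative (q - 2) * h x - x powr (q - 4) * M3 (1 / x)) (at x)"
  unfolding H_def
proof (rule DERIV_cong[OF DERIV_mult[OF has_real_derivative_powr[OF assms]
      has_real_derivative_inverse_comp[OF assms M2_deriv]]])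
  show "(q - 2) * x powr (q - 2 - 1) * M2 (1 / x) + - M3 (1 / x) / x\<^sup>2 * x powr (q - 2)
    = (q - 2) * h x - x powr (q - 4) * M3 (1 / x)"
    using assms by (simp add: h_def powr_diff_numeral field_simps flip: diff_diff_eq)
qed

lemma G_deriv:
  assumes "0 < x"
  shows "(G has_real_derivative h x - (q - 1) * q * x powr (q - 1) * M (1 / x)) (at x)"
  unfolding G_def
proof (rule DERIV_cong[OF DERIV_diff[OF
      DERIV_mult[OF DERIV_cmult[OF has_real_derivative_powr[OF assms]]
        has_real_derivative_inverse_comp[OF assms M_deriv]]
      DERIV_mult[OF has_real_derivative_powr[OF assms]
        has_real_derivative_inverse_comp[OF assms M1_deriv]]]])
  show "- (q - 1) * (q * x powr (q - 1)) * M (1 / x) + - M1 (1 / x) / x\<^sup>2 * (- (q - 1) * x powr q)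
      - ((q - 1) * x powr (q - 1 - 1) * M1 (1 / x) + - M2 (1 / x) / x\<^sup>2 * x powr (q - 1))
    = h x - (q - 1) * q * x powr (q - 1) * M (1 / x)"
    using assms by (simp add: h_def powr_diff_numeral field_simps flip: diff_diff_eq)
      (simp add: eval_nat_numeral)
qed

lemma G_nonpos:
  assumes "0 < x"
  shows "G x \<le> 0"
proof -
  have "0 \<le> (q - 1) * x powr q * M (1 / x)"
    using q_gt_1 M_pos[of "1 / x"] assms by simp
  moreover have "0 \<le> x powr (q - 1) * M1 (1 / x)"
    using M1_nonneg[of "1 / x"] assms by simp
  moreover have "G x = - ((q - 1) * x powr q * M (1 / x)) - x powr (q - 1) * M1 (1 / x)"
    unfolding G_def by (simp add: algebra_simps)
  ultimately show ?thesis by linarith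
qed

lemma continuous_on_phi: "S \<subseteq> {0<..} \<Longrightarrow> continuous_on S phi"
  unfolding phi_def
  by (intro continuous_intros continuous_on_subset[OF continuous_M]) auto

lemma phi_nonneg: "0 < t \<Longrightarrow> 0 \<le> phi t"
  unfolding phi_def using M_pos[of t] by simp

lemma has_integral_powr_M_inverse:
  assumes "1 / M_inv_1 \<le> T"
  shows "((\<lambda>x. x powr (q - 1) * M (1 / x)) has_integral integral {1/T..M_inv_1} phi)
    {1/M_inv_1..T}"
proof -
  have T: "0 < T" using assms by (rule pos_if_ge_inverse)
  have "continuous_on {1/T..M_inv_1} phi"
    using T by (intro continuous_on_phi) (auto intro: less_le_trans[of 0 "1/T"])
  then have "((\<lambda>x. phi (1 / x) / x\<^sup>2) has_integral integral {1/T..M_inv_1} phi) {1/M_inv_1..T}"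
    using has_integral_inverse_substitution[of "1/M_inv_1" T phi] assms M_inv_1_pos by simp
  moreover have "phi (1 / x) / x\<^sup>2 = x powr (q - 1) * M (1 / x)" if "x \<in> {1/M_inv_1..T}" for x
  proof -
    have "0 < x" using that pos_if_ge_inverse by simp
    then show ?thesis by (simp add: phi_def powr_divide powr_diff_numeral power2_eq_square)
  qed
  ultimately show ?thesis
    by (rule has_integral_cong[THEN iffD1, rotated]) simp
qed

lemma h_has_integral:
  assumes "1 / M_inv_1 \<le> T"
  shows "(h has_integral G T - G (1 / M_inv_1) + (q - 1) * q * integral {1/T..M_inv_1} phi)
    {1/M_inv_1..T}"
proof -
  have "((\<lambda>x. (h x - (q - 1) * q * x powr (q - 1) * M (1 / x))
        + (q - 1) * q * (x powr (q - 1) * M (1 / x))) has_integral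
      G T - G (1 / M_inv_1) + (q - 1) * q * integral {1/T..M_inv_1} phi) {1/M_inv_1..T}"
    using M_inv_1_pos assms
    by (intro has_integral_add has_integral_mult_right has_integral_of_deriv_on_pos G_deriv
        has_integral_powr_M_inverse) auto
  then show ?thesis by (simp add: algebra_simps)
qed

lemma h_integral_bounded:
  assumes "(\<integral>\<^sup>+ t \<in> {0<..M_inv_1}. ennreal (phi t) \<partial>lborel) < \<infinity>"
  obtains B where "\<And>T. 1 / M_inv_1 \<le> T \<Longrightarrow> integral {1/M_inv_1..T} h \<le> B"
proof -
  define K where "K = enn2real (\<integral>\<^sup>+ t \<in> {0<..M_inv_1}. ennreal (phi t) \<partial>lborel)"
  have phi_le: "integral {1/T..M_inv_1} phi \<le> K" if T: "1 / M_inv_1 \<le> T" for T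
  proof -
    have pos: "0 < x" if "x \<in> {1/T..M_inv_1}" for x
      using that pos_if_ge_inverse[OF T] by (auto intro: less_le_trans[of 0 "1/T"])
    have "(phi has_integral integral {1/T..M_inv_1} phi) {1/T..M_inv_1}"
      using pos by (intro integrable_integral integrable_continuous_interval continuous_on_phi) auto
    then have "(\<integral>\<^sup>+ x. ennreal (phi x) * indicator {1/T..M_inv_1} x \<partial>lborel)
        = ennreal (integral {1/T..M_inv_1} phi)"
      by (rule nn_integral_has_integral_lebesgue'[rotated]) (use pos phi_nonneg in auto)
    then have "ennreal (integral {1/T..M_inv_1} phi)
        = (\<integral>\<^sup>+ x. ennreal (phi x) * indicator {1/T..M_inv_1} x \<partial>lborel)" ..
    also have "\<dots> \<le> (\<integral>\<^sup>+ t \<in> {0<..M_inv_1}. ennreal (phi t) \<partial>lborel)"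
      using pos by (intro nn_integral_mono) (auto split: split_indicator)
    also have "\<dots> = ennreal K"
      using assms by (simp add: K_def)
    finally show ?thesis
      by (subst (asm) ennreal_le_iff) (auto simp: K_def)
  qed
  have "integral {1/M_inv_1..T} h \<le> - G (1 / M_inv_1) + (q - 1) * q * K"
    if T: "1 / M_inv_1 \<le> T" for T
  proof -
    have "integral {1/M_inv_1..T} h = G T - G (1 / M_inv_1) + (q - 1) * q * integral {1/T..M_inv_1} phi"
      using h_has_integral[OF T] by (rule integral_unique)
    moreover have "G T \<le> 0"
      using G_nonpos pos_if_ge_inverse[OF T] by simp
    moreover have "(q - 1) * q * integral {1/T..M_inv_1} phi \<le> (q - 1) * q * K"
      using phi_le[OF T] q_gt_1 by (intro mult_left_mono) auto
    ultimately show ?thesis by linarith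
  qed
  then show ?thesis using that by blast
qed

lemma eventually_H_at_top:
  assumes "eventually (\<lambda>t. P (M2 t / t powr (q - 2))) (at_right 0)"
  shows "eventually (\<lambda>x. P (H x)) at_top"
proof -
  have "eventually (\<lambda>x. P (M2 (inverse x) / inverse x powr (q - 2))) at_top"
    using assms by (simp add: eventually_at_right_to_top)
  moreover have "eventually (\<lambda>x::real. 0 < x) at_top"
    by (rule eventually_gt_at_top)
  ultimately show ?thesis
    by eventually_elim (simp add: H_eq_ratio inverse_eq_divide)
qed

lemma H_limit_not_infinity:
  assumes h_bounded: "\<And>T. 1 / M_inv_1 \<le> T \<Longrightarrow> integral {1/M_inv_1..T} h \<le> B"
  shows "\<not> ((\<lambda>t. ereal (M2 t / t powr (q - 2))) \<longlongrightarrow> \<infinity>) (at_right 0)"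
proof
  assume "((\<lambda>t. ereal (M2 t / t powr (q - 2))) \<longlongrightarrow> \<infinity>) (at_right 0)"
  then have "eventually (\<lambda>t. ereal 1 < ereal (M2 t / t powr (q - 2))) (at_right 0)"
    by (rule order_tendstoD(1)) simp
  then have "eventually (\<lambda>x. 1 < H x) at_top"
    using eventually_H_at_top[of "\<lambda>y. 1 < y"] by simp
  then obtain T0 where T0: "1 / M_inv_1 \<le> T0" "\<And>x. T0 \<le> x \<Longrightarrow> 1 < H x"
    unfolding eventually_at_top_linorder by (meson max.cobounded1 max.cobounded2 order.trans)
  have T0_pos: "0 < T0" using T0(1) by (rule pos_if_ge_inverse)
  define I0 where "I0 = integral {1/M_inv_1..T0} h"
  define T where "T = T0 * exp (B - I0 + 1)"
  have "T0 \<le> T"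
    using T0_pos h_bounded[OF T0(1)] by (simp add: T_def I0_def)
  have "((\<lambda>x. 1 / x) has_integral ln T - ln T0) {T0..T}"
    by (rule has_integral_inverse[OF T0_pos \<open>T0 \<le> T\<close>])
  moreover have "(h has_integral integral {T0..T} h) {T0..T}"
    using T0_pos by (intro integrable_integral integrable_continuous_interval continuous_on_h) auto
  moreover have "1 / x \<le> h x" if "x \<in> {T0..T}" for x
    using that T0(2)[of x] T0_pos h_eq[of x] by (simp add: divide_right_mono)
  ultimately have "ln T - ln T0 \<le> integral {T0..T} h"
    by (rule has_integral_le)
  also have "integral {T0..T} h = integral {1/M_inv_1..T} h - I0"
  proof -
    have "h integrable_on {1/M_inv_1..T}"
      by (intro integrable_continuous_interval continuous_on_h) (auto intro: pos_if_ge_inverse)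
    from Henstock_Kurzweil_Integration.integral_combine[OF T0(1) \<open>T0 \<le> T\<close> this]
    show ?thesis by (simp add: I0_def)
  qed
  also have "\<dots> \<le> B - I0"
    using h_bounded T0(1) \<open>T0 \<le> T\<close> by simp
  finally show False
    using T0_pos by (simp add: T_def ln_mult)
qed

lemma H_bounded_above:
  assumes "\<And>T. 1 / M_inv_1 \<le> T \<Longrightarrow> integral {1/M_inv_1..T} h \<le> B"
    and "((\<lambda>t. ereal (M2 t / t powr (q - 2))) \<longlongrightarrow> L) (at_right 0)"
  obtains B' where "\<And>T. 1 / M_inv_1 \<le> T \<Longrightarrow> H T \<le> B'"
proof -
  have "L \<noteq> \<infinity>"
    using H_limit_not_infinity[OF assms(1)] assms(2) by auto
  then obtain n where "L < ereal (real n)"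
    using less_PInf_Ex_of_nat by blast
  then have "eventually (\<lambda>t. ereal (M2 t / t powr (q - 2)) < ereal (real n)) (at_right 0)"
    by (rule order_tendstoD(2)[OF assms(2)])
  then have "eventually (\<lambda>x. H x < real n) at_top"
    using eventually_H_at_top[of "\<lambda>y. y < real n"] by simp
  then have "eventually (\<lambda>x. H x \<le> real n) at_top"
    by (rule eventually_mono) simp
  moreover have "continuous_on {1/M_inv_1..} H"
    using pos_if_ge_inverse by (intro continuous_on_H) auto
  ultimately show ?thesis
    using continuous_bounded_above_if_eventually that by blast
qed

lemma moment_density_has_integral:
  assumes T: "1 / M_inv_1 \<le> T"
  shows "((\<lambda>x. x powr q * dens p x) has_integral
    (1 - q / p) * integral {1/M_inv_1..T} h + (1 / p) * (H T - H (1 / M_inv_1))) {1/M_inv_1..T}"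
proof -
  have "((\<lambda>x. (1 - q / p) * h x + (1 / p) * ((q - 2) * h x - x powr (q - 4) * M3 (1 / x)))
      has_integral (1 - q / p) * integral {1/M_inv_1..T} h + (1 / p) * (H T - H (1 / M_inv_1)))
    {1/M_inv_1..T}"
    using T h_has_integral[OF T] M_inv_1_pos
    by (intro has_integral_add has_integral_mult_right has_integral_of_deriv_on_pos H_deriv
        integrable_integral has_integral_integrable) auto
  moreover have "(1 - q / p) * h x + (1 / p) * ((q - 2) * h x - x powr (q - 4) * M3 (1 / x))
      = x powr q * dens p x" if "x \<in> {1/M_inv_1..T}" for x
  proof -
    have h_x: "h x = x powr q * (x powr (-3) * M2 (1 / x))"
      and M3_term: "x powr (q - 4) * M3 (1 / x) = x powr q * (x powr (-4) * M3 (1 / x))"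
      unfolding h_def by (simp_all add: mult.assoc flip: powr_add)
    show ?thesis
      unfolding h_x M3_term dens_def by (simp add: divide_inverse algebra_simps)
  qed
  ultimately show ?thesis
    by (rule has_integral_cong[THEN iffD1, rotated]) simp
qed

lemma moment_truncation_nn_integral:
  assumes T: "1 / M_inv_1 \<le> T" and dens_nonneg: "\<And>x. 0 < x \<Longrightarrow> 0 \<le> dens p x"
  shows "(\<integral>\<^sup>+ x. ennreal (indicator {0<..} x * dens p x) * ennreal (x powr q) * indicator {..T} x
      \<partial>lborel) = ennreal ((1 - q / p) * integral {1/M_inv_1..T} h + (1 / p) * (H T - H (1 / M_inv_1)))"
proof -
  have truncation: "ennreal (indicator {0<..} x * dens p x) * ennreal (x powr q) * indicator {..T} x
      = ennreal (x powr q * dens p x) * indicator {1/M_inv_1..T} x" for x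
  proof (cases "0 < x")
    case True
    then show ?thesis
      using dens_eq_0[of x p] dens_nonneg[of x]
      by (cases "x < 1 / M_inv_1") (auto split: split_indicator simp: ennreal_mult'' mult.commute)
  qed (auto split: split_indicator dest: pos_if_ge_inverse)
  show ?thesis
    unfolding truncation
    by (rule nn_integral_has_integral_lebesgue'[OF _ moment_density_has_integral[OF T]])
      (use dens_nonneg pos_if_ge_inverse in auto)
qed

lemma moment_nn_integral_finite:
  assumes "q < p" and dens_nonneg: "\<And>x. 0 < x \<Longrightarrow> 0 \<le> dens p x"
    and phi_finite: "(\<integral>\<^sup>+ t \<in> {0<..M_inv_1}. ennreal (phi t) \<partial>lborel) < \<infinity>"
    and limit: "((\<lambda>t. ereal (M2 t / t powr (q - 2))) \<longlongrightarrow> L) (at_right 0)"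
  shows "(\<integral>\<^sup>+ x. ennreal (indicator {0<..} x * dens p x) * ennreal (x powr q) \<partial>lborel) < \<infinity>"
proof -
  obtain Bh where Bh: "\<And>T. 1 / M_inv_1 \<le> T \<Longrightarrow> integral {1/M_inv_1..T} h \<le> Bh"
    using h_integral_bounded[OF phi_finite] by blast
  obtain BH where BH: "\<And>T. 1 / M_inv_1 \<le> T \<Longrightarrow> H T \<le> BH"
    using H_bounded_above[OF Bh limit] by blast
  define B where "B = (1 - q / p) * Bh + (1 / p) * (BH - H (1 / M_inv_1))"
  have p: "0 < p" "0 \<le> 1 - q / p"
    using \<open>q < p\<close> q_gt_1 by (auto simp: field_simps)
  have "(\<lambda>x. indicator {0<..} x *\<^sub>R dens p x) \<in> borel_measurable borel"
    by (intro borel_measurable_continuous_on_indicator continuous_on_dens) auto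
  then have [measurable]: "(\<lambda>x. indicator {0<..} x * dens p x) \<in> borel_measurable borel"
    by simp
  have bound: "(1 - q / p) * integral {1/M_inv_1..T} h + (1 / p) * (H T - H (1 / M_inv_1)) \<le> B"
    if T: "1 / M_inv_1 \<le> T" for T
  proof -
    have "(1 - q / p) * integral {1/M_inv_1..T} h \<le> (1 - q / p) * Bh"
      using Bh[OF T] p(2) by (rule mult_left_mono)
    moreover have "(1 / p) * (H T - H (1 / M_inv_1)) \<le> (1 / p) * (BH - H (1 / M_inv_1))"
      using BH[OF T] p(1) by (intro mult_left_mono) auto
    ultimately show ?thesis
      unfolding B_def by linarith
  qed
  have "(\<integral>\<^sup>+ x. ennreal (indicator {0<..} x * dens p x) * ennreal (x powr q) * indicator {..T} x
      \<partial>lborel) \<le> ennreal B" if T: "1 / M_inv_1 \<le> T" for T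
  proof -
    have "(\<integral>\<^sup>+ x. ennreal (indicator {0<..} x * dens p x) * ennreal (x powr q) * indicator {..T} x
        \<partial>lborel) = ennreal ((1 - q / p) * integral {1/M_inv_1..T} h + (1 / p) * (H T - H (1 / M_inv_1)))"
      by (rule moment_truncation_nn_integral) (use T dens_nonneg in auto)
    also have "\<dots> \<le> ennreal B"
      by (rule ennreal_leI[OF bound[OF T]])
    finally show ?thesis .
  qed
  then have "(\<integral>\<^sup>+ x. ennreal (indicator {0<..} x * dens p x) * ennreal (x powr q) \<partial>lborel)
      \<le> ennreal B"
    by (rule nn_integral_le_if_truncations_le[rotated]) measurable
  then show ?thesis
    by (rule le_less_trans) simp
qed

end

theorem lemma4p3:
  fixes p q C :: real and M M1 M2 M3 :: "real \<Rightarrow> real"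
    and P :: "'a measure" and X :: "'a \<Rightarrow> real"
  assumes qp: "1 < q" "q < p"
    and orl: "orlicz_function M" and norm: "normalized_orlicz M"
    and C3: "\<And>x. x \<ge> 0 \<Longrightarrow> (M has_real_derivative M1 x) (at x within {0..})"
            "\<And>x. x \<ge> 0 \<Longrightarrow> (M1 has_real_derivative M2 x) (at x within {0..})"
            "\<And>x. x \<ge> 0 \<Longrightarrow> (M2 has_real_derivative M3 x) (at x within {0..})"
            "continuous_on {0..} M3"
    and M1_0: "M1 0 = 0"
    and lin: "\<exists>\<alpha> \<beta>. \<forall>t \<ge> orlicz_inv M 1. M t = \<alpha> * t + \<beta>"
    and lim: "\<exists>L :: ereal. ((\<lambda>t. ereal (M2 t / t powr (q - 2))) \<longlongrightarrow> L) (at_right 0)"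
    and Cpos: "C > 0"
    and intc: "\<And>s. 0 < s \<Longrightarrow> s \<le> orlicz_inv M 1 \<Longrightarrow>
       (\<integral>\<^sup>+ t \<in> {0<..s}. ennreal (M t / t powr q / t) \<partial>lborel) \<le> ennreal (C * M s / s powr q)"
    and fnn: "\<And>x. x > 0 \<Longrightarrow>
       (1 - 2 / p) * x powr (-3) * M2 (1 / x) - (1 / p) * x powr (-4) * M3 (1 / x) \<ge> 0"
    and P: "prob_space P"
    and Xpos: "AE \<omega> in P. X \<omega> > 0"
    and Xdist: "distributed P lborel X
       (\<lambda>x. ennreal (indicator {0<..} x *
          ((1 - 2 / p) * x powr (-3) * M2 (1 / x) - (1 / p) * x powr (-4) * M3 (1 / x))))"
  shows "integrable P (\<lambda>\<omega>. X \<omega> powr q)"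
proof -
  interpret orlicz_power M M1 M2 M3 q
    by unfold_locales (use orl C3 lin qp in auto)
  obtain L where L: "((\<lambda>t. ereal (M2 t / t powr (q - 2))) \<longlongrightarrow> L) (at_right 0)"
    using lim by blast
  have "(\<integral>\<^sup>+ t \<in> {0<..M_inv_1}. ennreal (phi t) \<partial>lborel) < \<infinity>"
    using intc[OF M_inv_1_pos order.refl] unfolding phi_def
    by (rule le_less_trans) simp
  then have "(\<integral>\<^sup>+ x. ennreal (indicator {0<..} x * dens p x) * ennreal (x powr q) \<partial>lborel) < \<infinity>"
    using moment_nn_integral_finite[OF qp(2) _ _ L] fnn by (simp add: dens_def)
  also have "(\<integral>\<^sup>+ x. ennreal (indicator {0<..} x * dens p x) * ennreal (x powr q) \<partial>lborel)
      = (\<integral>\<^sup>+ \<omega>. ennreal (X \<omega> powr q) \<partial>P)"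
    using Xdist unfolding dens_def by (rule distributed_nn_integral) measurable
  finally show ?thesis
    using distributed_measurable[OF Xdist] by (intro integrableI_bounded) auto
qed

end
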